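(* Let $\mathcal F_2$ be the set consisting of the following five graphs: the path $P_4$ on four vertices; $K_5\setminus S_2$ (the complete graph on 5 vertices with the two edges of a path $uvw$ removed, i.e. one vertex non-adjacent to exactly two others); $K_6\setminus M_2$ (the complete graph on 6 vertices with two disjoint edges removed); the graph on vertices $1,\dots,5$ with edges $24,34,23,14,45$ (a triangle with two pendant vertices attached to the same vertex of the triangle); and the graph on vertices $1,\dots,5$ with edges $12,14,23,24,34,45$ (the diamond $K_4$ minus the edge $13$, together with a pendant vertex $5$ attached to the degree-3 vertex $4$). Then $\mathcal F_2\subseteq {\bf Forb}(\Gamma_{\le 2})$.
   Context: For a finite graph $G$ and indeterminates $X_G=\{x_u : u\in V(G)\}$, the generalized Laplacian matrix $L(G,X_G)$ is the $V(G)\times V(G)$ matrix over $\mathbb{Z}[X_G]$ with $(u,u)$-entry $x_u$ and $(u,v)$-entry $-m_{uv}$ for $u\ne v$, $m_{uv}$ being the number of edges between $u$ and $v$. The $i$-th critical ideal $I_i(G,X_G)$ is the ideal of $\mathbb{Z}[X_G]$ generated by all $i\times i$ minors of $L(G,X_G)$ (with $I_i=\langle1\rangle$ for $i<1$, $I_i=\langle 0\rangle$ for $i>|V(G)|$). The algebraic co-rank $\gamma(G)$ is the number of critical ideals of $G$ equal to $\langle 1\rangle$. $\Gamma_{\le k}$ is the set of simple connected graphs $G$ with $\gamma(G)\le k$. ${\bf Forb}(\Gamma_{\le k})$ is the set of minimal (with respect to induced subgraphs) simple connected graphs $G$ with $\gamma(G)\ge k+1$; equivalently, the simple connected graphs $G$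 with $\gamma(G)=k+1$ such that $\gamma(G\setminus v)<\gamma(G)$ for every vertex $v$. *)

theory Defs
  imports "HOL-Library.Poly_Mapping" "Jordan_Normal_Form.Determinant"
begin

text \<open>Integer multivariate polynomials in indeterminates x_u (u :: nat).\<close>
type_synonym ipoly = "(nat \<Rightarrow>\<^sub>0 nat) \<Rightarrow>\<^sub>0 int"

definition var :: "nat \<Rightarrow> ipoly" where
  "var u = Poly_Mapping.single (Poly_Mapping.single u 1) 1"

definition ideal_gen :: "ipoly set \<Rightarrow> ipoly set" where
  "ideal_gen S = {(\<Sum>m\<in>F. c m * m) | F c. finite F \<and> F \<subseteq> S}"

text \<open>A graph is given by a finite vertex set V of naturals and an edge relation E
  (only its restriction to V matters). Simple graph: E symmetric and irreflexive.\<close>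
definition simple_graph :: "nat set \<Rightarrow> (nat \<Rightarrow> nat \<Rightarrow> bool) \<Rightarrow> bool" where
  "simple_graph V E \<longleftrightarrow> finite V \<and> (\<forall>u\<in>V. \<forall>v\<in>V. E u v \<longleftrightarrow> E v u) \<and> (\<forall>u\<in>V. \<not> E u u)"

definition connected_graph :: "nat set \<Rightarrow> (nat \<Rightarrow> nat \<Rightarrow> bool) \<Rightarrow> bool" where
  "connected_graph V E \<longleftrightarrow> V \<noteq> {} \<and>
     (\<forall>u\<in>V. \<forall>v\<in>V. (\<lambda>a b. a \<in> V \<and> b \<in> V \<and> E a b)\<^sup>*\<^sup>* u v)"

definition gen_lap :: "(nat \<Rightarrow> nat \<Rightarrow> bool) \<Rightarrow> nat \<Rightarrow> nat \<Rightarrow> ipoly" where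
  "gen_lap E u v = (if u = v then var u else - (if E u v then 1 else 0))"

definition minor :: "(nat \<Rightarrow> nat \<Rightarrow> bool) \<Rightarrow> nat set \<Rightarrow> nat set \<Rightarrow> ipoly" where
  "minor E R C = (let rs = sorted_list_of_set R; cs = sorted_list_of_set C
     in det (mat (card R) (card C) (\<lambda>(a, b). gen_lap E (rs ! a) (cs ! b))))"

definition minors :: "nat set \<Rightarrow> (nat \<Rightarrow> nat \<Rightarrow> bool) \<Rightarrow> nat \<Rightarrow> ipoly set" where
  "minors V E i = {minor E R C | R C. R \<subseteq> V \<and> C \<subseteq> V \<and> card R = i \<and> card C = i}"

definition critical_ideal :: "nat set \<Rightarrow> (nat \<Rightarrow> nat \<Rightarrow> bool) \<Rightarrow> int \<Rightarrow> ipoly set" where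
  "critical_ideal V E i =
     (if i < 1 then UNIV
      else if nat i > card V then {0}
      else ideal_gen (minors V E (nat i)))"

text \<open>Algebraic co-rank: number of critical ideals equal to the unit ideal
  (the ideals with index i < 1 are trivially \<langle>1\<rangle> by convention and are not counted).\<close>
definition gamma :: "nat set \<Rightarrow> (nat \<Rightarrow> nat \<Rightarrow> bool) \<Rightarrow> nat" where
  "gamma V E = card {i::nat. 1 \<le> i \<and> i \<le> card V \<and> critical_ideal V E (int i) = UNIV}"

definition del_vertex :: "nat set \<Rightarrow> nat \<Rightarrow> nat set" where
  "del_vertex V v = V - {v}"

definition Forb_le :: "nat \<Rightarrow> nat set \<Rightarrow> (nat \<Rightarrow> nat \<Rightarrow> bool) \<Rightarrow> bool" where
  "Forb_le k V E \<longleftrightarrow> simple_graph V E \<and> connected_graph V E \<and> gamma V E = k + 1 \<and>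
     (\<forall>v\<in>V. gamma (del_vertex V v) E < gamma V E)"

definition edges_of :: "(nat \<times> nat) list \<Rightarrow> nat \<Rightarrow> nat \<Rightarrow> bool" where
  "edges_of l u v \<longleftrightarrow> (u, v) \<in> set l \<or> (v, u) \<in> set l"

definition complete_minus :: "nat set \<Rightarrow> (nat \<times> nat) list \<Rightarrow> nat \<Rightarrow> nat \<Rightarrow> bool" where
  "complete_minus V l u v \<longleftrightarrow> u \<in> V \<and> v \<in> V \<and> u \<noteq> v \<and> \<not> edges_of l u v"

definition F2 :: "(nat set \<times> (nat \<Rightarrow> nat \<Rightarrow> bool)) set" where
  "F2 = {({1..4}, edges_of [(1,2),(2,3),(3,4)]),
         ({1..5}, complete_minus {1..5} [(1,2),(2,3)]),
         ({1..6}, complete_minus {1..6} [(1,2),(3,4)]),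
         ({1..5}, edges_of [(2,4),(3,4),(2,3),(1,4),(4,5)]),
         ({1..5}, edges_of [(1,2),(1,4),(2,3),(2,4),(3,4),(4,5)])}"

end

theory Submission
  imports Defs
begin

text \<open>Evaluating the indeterminates at an integer point \<open>x\<close> is a ring homomorphism
  \<open>\<int>[X\<^sub>G] \<rightarrow> \<int>\<close> that maps every minor of \<open>L(G, X\<^sub>G)\<close> to the corresponding minor of the integer
  matrix \<open>L(G, x)\<close>. If \<open>L(G, x)\<close> factors through \<open>\<int>\<^sup>r\<close>, all its minors of size greater than \<open>r\<close>
  vanish, so the corresponding critical ideals lie in the kernel of the evaluation and are
  proper; hence \<open>\<gamma>(G) \<le> r\<close>. Conversely a critical ideal is trivial as soon as some minor
  is \<open>\<plusminus>1\<close>. For each of the five graphs, explicit minors \<open>\<plusminus>1\<close> of sizes 1, 2, 3 together with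
  a factorization through \<open>\<int>\<^sup>3\<close> give \<open>\<gamma>(G) = 3\<close>, and for every vertex \<open>v\<close> a factorization
  of \<open>L(G \<setminus> v, x)\<close> through \<open>\<int>\<^sup>2\<close> gives \<open>\<gamma>(G \<setminus> v) \<le> 2\<close>.\<close>

definition eval_monom :: "(nat \<Rightarrow> int) \<Rightarrow> (nat \<Rightarrow>\<^sub>0 nat) \<Rightarrow> int" where
  "eval_monom x m = (\<Prod>v\<in>Poly_Mapping.keys m. x v ^ Poly_Mapping.lookup m v)"

definition eval_ipoly :: "(nat \<Rightarrow> int) \<Rightarrow> ipoly \<Rightarrow> int" where
  "eval_ipoly x p = (\<Sum>m\<in>Poly_Mapping.keys p. Poly_Mapping.lookup p m * eval_monom x m)"

lemma eval_monom_superset: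
  "finite S \<Longrightarrow> Poly_Mapping.keys m \<subseteq> S \<Longrightarrow>
    eval_monom x m = (\<Prod>v\<in>S. x v ^ Poly_Mapping.lookup m v)"
  unfolding eval_monom_def by (rule prod.mono_neutral_left) (auto simp: in_keys_iff)

lemma eval_monom_add: "eval_monom x (m + n) = eval_monom x m * eval_monom x n"
proof -
  let ?S = "Poly_Mapping.keys m \<union> Poly_Mapping.keys n"
  have "eval_monom x (m + n) = (\<Prod>v\<in>?S. x v ^ Poly_Mapping.lookup (m + n) v)"
    by (rule eval_monom_superset) (auto simp: keys_add)
  also have "\<dots> = (\<Prod>v\<in>?S. x v ^ Poly_Mapping.lookup m v) *
                    (\<Prod>v\<in>?S. x v ^ Poly_Mapping.lookup n v)"
    by (simp add: lookup_add power_add prod.distrib)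
  also have "\<dots> = eval_monom x m * eval_monom x n"
    by (simp add: eval_monom_superset[of ?S])
  finally show ?thesis .
qed

lemma eval_ipoly_superset:
  "finite S \<Longrightarrow> Poly_Mapping.keys p \<subseteq> S \<Longrightarrow>
    eval_ipoly x p = (\<Sum>m\<in>S. Poly_Mapping.lookup p m * eval_monom x m)"
  unfolding eval_ipoly_def by (rule sum.mono_neutral_left) (auto simp: in_keys_iff)

lemma eval_ipoly_add: "eval_ipoly x (p + q) = eval_ipoly x p + eval_ipoly x q"
proof -
  let ?S = "Poly_Mapping.keys p \<union> Poly_Mapping.keys q"
  have "finite ?S" "Poly_Mapping.keys (p + q) \<subseteq> ?S" by (auto simp: keys_add)
  then show ?thesis
    by (simp add: eval_ipoly_superset[of ?S] lookup_add sum.distrib algebra_simps)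
qed

lemma eval_ipoly_single: "eval_ipoly x (Poly_Mapping.single m c) = c * eval_monom x m"
  by (subst eval_ipoly_superset[of "{m}"]) auto

lemma eval_ipoly_0: "eval_ipoly x 0 = 0"
  by (simp add: eval_ipoly_def)

lemma eval_ipoly_sum: "eval_ipoly x (\<Sum>i\<in>A. f i) = (\<Sum>i\<in>A. eval_ipoly x (f i))"
  by (induct A rule: infinite_finite_induct) (simp_all add: eval_ipoly_0 eval_ipoly_add)

lemma poly_mapping_sum_single:
  "p = (\<Sum>m\<in>Poly_Mapping.keys p. Poly_Mapping.single m (Poly_Mapping.lookup p m))"
  by (rule poly_mapping_eqI)
    (auto simp: lookup_sum lookup_single when_def in_keys_iff intro: sum.neutral)

lemma eval_ipoly_mult: "eval_ipoly x (p * q) = eval_ipoly x p * eval_ipoly x q"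
proof -
  have "p * q = (\<Sum>m\<in>Poly_Mapping.keys p. Poly_Mapping.single m (Poly_Mapping.lookup p m)) *
                (\<Sum>n\<in>Poly_Mapping.keys q. Poly_Mapping.single n (Poly_Mapping.lookup q n))"
    using poly_mapping_sum_single[of p] poly_mapping_sum_single[of q] by simp
  also have "\<dots> = (\<Sum>m\<in>Poly_Mapping.keys p. \<Sum>n\<in>Poly_Mapping.keys q.
      Poly_Mapping.single (m + n) (Poly_Mapping.lookup p m * Poly_Mapping.lookup q n))"
    by (simp add: sum_distrib_left sum_distrib_right mult_single
        sum.swap[of _ "Poly_Mapping.keys q"])
  finally have "eval_ipoly x (p * q) = (\<Sum>m\<in>Poly_Mapping.keys p. \<Sum>n\<in>Poly_Mapping.keys q.
       (Poly_Mapping.lookup p m * eval_monom x m) * (Poly_Mapping.lookup q n * eval_monom x n))"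
    by (simp add: eval_ipoly_sum eval_ipoly_single eval_monom_add mult.assoc mult.left_commute)
  also have "\<dots> = eval_ipoly x p * eval_ipoly x q"
    by (simp add: eval_ipoly_def sum_distrib_left sum_distrib_right
        sum.swap[of _ "Poly_Mapping.keys q"])
  finally show ?thesis .
qed

lemma eval_ipoly_1: "eval_ipoly x 1 = 1"
  using eval_ipoly_single[of x 0 1] by (simp add: eval_monom_def)

interpretation eval_ipoly: comm_ring_hom "eval_ipoly x"
  by unfold_locales (simp_all add: eval_ipoly_0 eval_ipoly_1 eval_ipoly_add eval_ipoly_mult)

definition laplacian_at ::
  "(nat \<Rightarrow> nat \<Rightarrow> bool) \<Rightarrow> (nat \<Rightarrow> int) \<Rightarrow> nat \<Rightarrow> nat \<Rightarrow> int" where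
  "laplacian_at E x u v = (if u = v then x u else if E u v then -1 else 0)"

lemma eval_ipoly_gen_lap: "eval_ipoly x (gen_lap E u v) = laplacian_at E x u v"
  by (simp add: gen_lap_def laplacian_at_def var_def eval_ipoly_single eval_monom_def
      eval_ipoly.hom_uminus)

lemma det_eq_0_if_zero_row:
  assumes "A \<in> carrier_mat n n" "k < n" "\<And>j. j < n \<Longrightarrow> A $$ (k, j) = 0"
  shows "det A = 0"
proof -
  have "(\<Prod>i = 0..<n. A $$ (i, p i)) = 0" if "p permutes {0..<n}" for p
  proof -
    have "p k < n" using that \<open>k < n\<close> by (simp add: permutes_in_image)
    then show ?thesis using assms(2,3) by (intro prod_zero) (auto intro!: bexI[of _ k])
  qed
  then show ?thesis by (simp add: det_def'[OF assms(1)])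
qed

lemma det_eq_0_if_rank_factorization:
  fixes f :: "nat \<Rightarrow> nat \<Rightarrow> 'a :: comm_ring_1"
  assumes f: "\<And>a b. a < n \<Longrightarrow> b < n \<Longrightarrow> f a b = (\<Sum>k<r. U k a * W k b)" and "r < n"
  shows "det (mat n n (\<lambda>(a, b). f a b)) = 0"
proof -
  define P where "P = mat n n (\<lambda>(a, k). if k < r then U k a else 0)"
  define Q where "Q = mat n n (\<lambda>(k, b). if k < r then W k b else 0)"
  have "mat n n (\<lambda>(a, b). f a b) = P * Q"
  proof (rule eq_matI)
    fix a b assume "a < dim_row (P * Q)" "b < dim_col (P * Q)"
    then have ab: "a < n" "b < n" by (auto simp: P_def Q_def)
    have "(P * Q) $$ (a, b) =
        (\<Sum>k\<in>{0..<n}. (if k < r then U k a else 0) * (if k < r then W k b else 0))"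
      using ab by (simp add: P_def Q_def scalar_prod_def)
    also have "\<dots> = (\<Sum>k\<in>{0..<r}. U k a * W k b)"
      using \<open>r < n\<close> by (intro sum.mono_neutral_cong_right) auto
    finally show "mat n n (\<lambda>(a, b). f a b) $$ (a, b) = (P * Q) $$ (a, b)"
      using ab f[OF ab] by (simp add: lessThan_atLeast0)
  qed (auto simp: P_def Q_def)
  moreover have "det Q = 0"
    by (rule det_eq_0_if_zero_row[of Q n r]) (use \<open>r < n\<close> in \<open>auto simp: Q_def\<close>)
  ultimately show ?thesis
    using det_mult[of P n Q] by (simp add: P_def Q_def)
qed

lemma det_mat_1: "det (mat (Suc 0) (Suc 0) f) = f (0, 0)"
  by (subst det_single) auto

lemma det_mat_2:
  "det (mat (Suc (Suc 0)) (Suc (Suc 0)) f) =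
     f (0, 0) * f (1, 1) - f (0, 1) * (f (1, 0) :: 'a :: comm_ring_1)"
proof -
  have "det (mat 2 2 f) = (\<Sum>j<2. mat 2 2 f $$ (0, j) * cofactor (mat 2 2 f) 0 j)"
    by (rule laplace_expansion_row) auto
  then show ?thesis
    by (simp add: numeral_2_eq_2 cofactor_def mat_delete_def det_mat_1)
qed

lemma det_mat_3:
  "det (mat (Suc (Suc (Suc 0))) (Suc (Suc (Suc 0))) f) =
     f (0, 0) * (f (1, 1) * f (2, 2) - f (1, 2) * f (2, 1))
   - f (0, 1) * (f (1, 0) * f (2, 2) - f (1, 2) * f (2, 0))
   + f (0, 2) * (f (1, 0) * f (2, 1) - f (1, 1) * (f (2, 0) :: 'a :: comm_ring_1))"
proof -
  have "det (mat 3 3 f) = (\<Sum>j<3. mat 3 3 f $$ (0, j) * cofactor (mat 3 3 f) 0 j)"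
    by (rule laplace_expansion_row) auto
  then show ?thesis
    by (simp add: numeral_3_eq_3 cofactor_def mat_delete_def det_mat_2 eval_nat_numeral
        algebra_simps)
qed

lemma ideal_gen_neq_UNIV_if_common_root:
  assumes "\<forall>p\<in>S. eval_ipoly x p = 0"
  shows "ideal_gen S \<noteq> UNIV"
proof
  assume "ideal_gen S = UNIV"
  then obtain F c where F: "finite F" "F \<subseteq> S" and one: "1 = (\<Sum>p\<in>F. c p * p)"
    unfolding ideal_gen_def by blast
  have "eval_ipoly x 1 = (\<Sum>p\<in>F. eval_ipoly x (c p) * eval_ipoly x p)"
    by (simp add: one eval_ipoly_sum eval_ipoly_mult)
  also have "\<dots> = 0" using F assms by (auto intro!: sum.neutral)
  finally show False by (simp add: eval_ipoly_1)
qed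

lemma ideal_gen_eq_UNIV_if_unit:
  assumes "u \<in> S" "u dvd 1"
  shows "ideal_gen S = UNIV"
proof -
  obtain v where uv: "1 = u * v" using \<open>u dvd 1\<close> by blast
  have "p \<in> ideal_gen S" for p
  proof -
    have "p = (\<Sum>q\<in>{u}. (p * v) * q)" using uv by (simp add: algebra_simps)
    then show ?thesis
      unfolding ideal_gen_def using \<open>u \<in> S\<close>
      by (intro CollectI exI[of _ "{u}"] exI[of _ "\<lambda>_. p * v"]) simp
  qed
  then show ?thesis by blast
qed

lemma eval_minor_eq_0_if_rank_factorization:
  assumes "finite V" and fac: "\<forall>u\<in>V. \<forall>v\<in>V. laplacian_at E x u v = (\<Sum>k<r. U k u * W k v)"
    and RC: "R \<subseteq> V" "C \<subseteq> V" "card R = i" "card C = i" and "r < i"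
  shows "eval_ipoly x (minor E R C) = 0"
proof -
  define rs where "rs = sorted_list_of_set R"
  define cs where "cs = sorted_list_of_set C"
  have "finite R" "finite C" using RC \<open>finite V\<close> finite_subset by auto
  then have "set rs = R" "length rs = i" "set cs = C" "length cs = i"
    using RC by (simp_all add: rs_def cs_def)
  then have rs: "rs ! a \<in> V" and cs: "cs ! a \<in> V" if "a < i" for a
    using RC that by (metis nth_mem subsetD)+
  have "eval_ipoly x (minor E R C) =
      det (map_mat (eval_ipoly x) (mat i i (\<lambda>(a, b). gen_lap E (rs ! a) (cs ! b))))"
    unfolding minor_def rs_def cs_def Let_def using RC by (simp add: eval_ipoly.hom_det)
  also have "map_mat (eval_ipoly x) (mat i i (\<lambda>(a, b). gen_lap E (rs ! a) (cs ! b)))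
     = mat i i (\<lambda>(a, b). laplacian_at E x (rs ! a) (cs ! b))"
    by (rule eq_matI) (auto simp: eval_ipoly_gen_lap)
  also have "det \<dots> = 0"
    using fac rs cs by (intro det_eq_0_if_rank_factorization[OF _ \<open>r < i\<close>]) auto
  finally show ?thesis .
qed

lemma critical_ideal_eq_UNIV_imp_le_card:
  assumes "critical_ideal V E (int i) = UNIV"
  shows "i \<le> card V"
proof (rule ccontr)
  assume "\<not> i \<le> card V"
  then have "{0 :: ipoly} = UNIV" using assms by (simp add: critical_ideal_def)
  then show False by (metis UNIV_I singletonD zero_neq_one)
qed

lemma critical_ideal_neq_UNIV_if_rank_factorization:
  assumes "finite V" "\<forall>u\<in>V. \<forall>v\<in>V. laplacian_at E x u v = (\<Sum>k<r. U k u * W k v)"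
    and "r < i"
  shows "critical_ideal V E (int i) \<noteq> UNIV"
proof
  assume unit: "critical_ideal V E (int i) = UNIV"
  have "ideal_gen (minors V E i) \<noteq> UNIV"
    using eval_minor_eq_0_if_rank_factorization[OF assms(1,2) _ _ _ _ \<open>r < i\<close>]
    by (intro ideal_gen_neq_UNIV_if_common_root[of _ x]) (auto simp: minors_def)
  moreover have "critical_ideal V E (int i) = ideal_gen (minors V E i)"
    using critical_ideal_eq_UNIV_imp_le_card[OF unit] \<open>r < i\<close> by (simp add: critical_ideal_def)
  ultimately show False using unit by simp
qed

lemma critical_ideal_eq_UNIV_if_unit_minor:
  assumes "finite V" "R \<subseteq> V" "C \<subseteq> V" "card R = i" "card C = i" "1 \<le> i"
    and "minor E R C dvd 1"
  shows "critical_ideal V E (int i) = UNIV"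
proof -
  have "i \<le> card V" using assms card_mono by metis
  moreover have "ideal_gen (minors V E i) = UNIV"
    using assms by (intro ideal_gen_eq_UNIV_if_unit[of "minor E R C"]) (auto simp: minors_def)
  ultimately show ?thesis using \<open>1 \<le> i\<close> by (simp add: critical_ideal_def)
qed

lemma gamma_le_if_rank_factorization:
  assumes "finite V" "\<forall>u\<in>V. \<forall>v\<in>V. laplacian_at E x u v = (\<Sum>k<r. U k u * W k v)"
  shows "gamma V E \<le> r"
proof -
  have "i \<le> r" if "critical_ideal V E (int i) = UNIV" for i
    using critical_ideal_neq_UNIV_if_rank_factorization[OF assms] that by (metis not_less)
  then have "{i. 1 \<le> i \<and> i \<le> card V \<and> critical_ideal V E (int i) = UNIV} \<subseteq> {1..r}"
    by auto
  from card_mono[OF _ this] show ?thesis unfolding gamma_def by simp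
qed

lemma gamma_eq_if_rank_factorization:
  assumes "finite V" "\<forall>u\<in>V. \<forall>v\<in>V. laplacian_at E x u v = (\<Sum>k<r. U k u * W k v)"
    and "\<And>i. 1 \<le> i \<Longrightarrow> i \<le> r \<Longrightarrow> critical_ideal V E (int i) = UNIV"
  shows "gamma V E = r"
proof -
  have unit_iff: "critical_ideal V E (int i) = UNIV \<longleftrightarrow> i \<le> r" if "1 \<le> i" for i
    using critical_ideal_neq_UNIV_if_rank_factorization[OF assms(1,2)] assms(3) that
    by (metis not_less)
  have "{i. 1 \<le> i \<and> i \<le> card V \<and> critical_ideal V E (int i) = UNIV} = {1..r}"
  proof (intro equalityI subsetI)
    fix i assume "i \<in> {i. 1 \<le> i \<and> i \<le> card V \<and> critical_ideal V E (int i) = UNIV}"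
    then show "i \<in> {1..r}" using unit_iff by (simp del: One_nat_def) blast
  next
    fix i assume "i \<in> {1..r}"
    then have "1 \<le> i" "critical_ideal V E (int i) = UNIV" using unit_iff by simp_all
    then show "i \<in> {i. 1 \<le> i \<and> i \<le> card V \<and> critical_ideal V E (int i) = UNIV}"
      using critical_ideal_eq_UNIV_imp_le_card by simp
  qed
  then show ?thesis by (simp add: gamma_def)
qed

lemma simple_graph_edges_of:
  "finite V \<Longrightarrow> \<forall>(u, v)\<in>set l. u \<noteq> v \<Longrightarrow> simple_graph V (edges_of l)"
  by (auto simp: simple_graph_def edges_of_def)

lemma simple_graph_complete_minus: "finite V \<Longrightarrow> simple_graph V (complete_minus V l)"
  by (auto simp: simple_graph_def complete_minus_def edges_of_def)

lemma connected_graph_if_eccentricity_le_2: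
  assumes "simple_graph V E" "c \<in> V"
    and near: "\<forall>v\<in>V. v = c \<or> E c v \<or> (\<exists>w\<in>V. E c w \<and> E w v)"
  shows "connected_graph V E"
proof -
  let ?R = "\<lambda>a b. a \<in> V \<and> b \<in> V \<and> E a b"
  have from_c: "?R\<^sup>*\<^sup>* c v" if "v \<in> V" for v
  proof -
    consider "v = c" | "E c v" | w where "w \<in> V" "E c w" "E w v"
      using near \<open>v \<in> V\<close> by blast
    then show ?thesis
    proof cases
      case 2
      then show ?thesis using \<open>c \<in> V\<close> \<open>v \<in> V\<close> by (intro r_into_rtranclp) simp
    next
      case 3
      then show ?thesis
        using \<open>c \<in> V\<close> \<open>v \<in> V\<close>
          rtranclp.rtrancl_into_rtrancl[OF r_into_rtranclp[of ?R c w], of v]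
        by simp
    qed simp
  qed
  have "symp ?R" using \<open>simple_graph V E\<close> unfolding symp_def simple_graph_def by blast
  then have to_c: "?R\<^sup>*\<^sup>* v c" if "v \<in> V" for v
    using from_c[OF that] by (rule sympD[OF symp_rtranclp])
  show ?thesis
    unfolding connected_graph_def
  proof (intro conjI ballI)
    show "V \<noteq> {}" using \<open>c \<in> V\<close> by blast
    fix u v assume "u \<in> V" "v \<in> V"
    then show "?R\<^sup>*\<^sup>* u v" by (rule rtranclp_trans[OF to_c from_c])
  qed
qed

lemma Forb_le_if_certificate:
  fixes x :: "int list" and U W :: "int list list" and xs :: "int list list"
    and Us Ws :: "int list list list"
  assumes "simple_graph V E" "connected_graph V E"
    and "\<forall>u\<in>V. \<forall>w\<in>V. laplacian_at E ((!) x) u w = (\<Sum>k<Suc r. U ! k ! u * W ! k ! w)"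
    and "\<forall>i\<in>{1..Suc r}. critical_ideal V E (int i) = UNIV"
    and "\<forall>v\<in>V. \<forall>u\<in>V. \<forall>w\<in>V. u \<noteq> v \<longrightarrow> w \<noteq> v \<longrightarrow>
           laplacian_at E ((!) (xs ! v)) u w = (\<Sum>k<r. Us ! v ! k ! u * Ws ! v ! k ! w)"
  shows "Forb_le r V E"
proof -
  have "finite V" using \<open>simple_graph V E\<close> by (simp add: simple_graph_def)
  have "gamma V E = Suc r"
    using assms(3,4) \<open>finite V\<close> by (intro gamma_eq_if_rank_factorization) auto
  moreover have "gamma (del_vertex V v) E \<le> r" if "v \<in> V" for v
    using assms(5) that \<open>finite V\<close> unfolding del_vertex_def
    by (intro gamma_le_if_rank_factorization[where x = "(!) (xs ! v)"]) auto
  ultimately show ?thesis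
    using assms(1,2) by (auto simp: Forb_le_def less_Suc_eq_le)
qed

abbreviation path_P4 :: "nat \<Rightarrow> nat \<Rightarrow> bool" where
  "path_P4 \<equiv> edges_of [(1, 2), (2, 3), (3, 4)]"

abbreviation K5_minus_S2 :: "nat \<Rightarrow> nat \<Rightarrow> bool" where
  "K5_minus_S2 \<equiv> complete_minus {1..5} [(1, 2), (2, 3)]"

abbreviation K6_minus_M2 :: "nat \<Rightarrow> nat \<Rightarrow> bool" where
  "K6_minus_M2 \<equiv> complete_minus {1..6} [(1, 2), (3, 4)]"

abbreviation cricket :: "nat \<Rightarrow> nat \<Rightarrow> bool" where
  "cricket \<equiv> edges_of [(2, 4), (3, 4), (2, 3), (1, 4), (4, 5)]"

abbreviation dart :: "nat \<Rightarrow> nat \<Rightarrow> bool" where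
  "dart \<equiv> edges_of [(1, 2), (1, 4), (2, 3), (2, 4), (3, 4), (4, 5)]"

lemmas certificate_simps = edges_of_def complete_minus_def eval_nat_numeral atLeastAtMostSuc_conv

text \<open>Certificate lists are indexed by vertex, so their entry 0 is a dummy; the lists
  \<open>xs\<close>, \<open>Us\<close>, \<open>Ws\<close> are moreover indexed by the deleted vertex.\<close>

lemma Forb_le_2_path_P4: "Forb_le 2 {1..4} path_P4"
proof (rule Forb_le_if_certificate[where
    x  = "[ 0, -3, -1, -2, -2]" and
    U  = "[[ 0,  1,  0,  0,  1],
           [ 0,  0,  1,  0, -3],
           [ 0,  0,  0,  1,  2]]" and
    W  = "[[ 0, -3, -1,  0,  0],
           [ 0, -1, -1, -1,  0],
           [ 0,  0, -1, -2, -1]]" and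
    xs = "[[],
           [ 0,  0, -3,  0,  3],
           [ 0, -3,  0, -1, -1],
           [ 0, -3, -3,  0,  0],
           [ 0, -3,  0,  3,  0]]" and
    Us = "[[],
           [[ 0,  0,  1,  0,  1], [ 0,  0,  0,  1, -3]],
           [[ 0,  1,  0,  0,  0], [ 0,  0,  0,  1,  1]],
           [[ 0,  1,  0,  0,  0], [ 0,  0,  1,  0,  0]],
           [[ 0,  1,  0,  1,  0], [ 0,  0,  1, -3,  0]]]" and
    Ws = "[[],
           [[ 0,  0, -3, -1,  0], [ 0,  0, -1,  0, -1]],
           [[ 0, -3,  0,  0,  0], [ 0,  0,  0, -1, -1]],
           [[ 0, -3, -1,  0,  0], [ 0, -1, -3,  0,  0]],
           [[ 0, -3, -1,  0,  0], [ 0, -1,  0, -1,  0]]]"])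
  show "simple_graph {1..4} path_P4" by (simp add: simple_graph_edges_of)
  then show "connected_graph {1..4} path_P4"
    by (rule connected_graph_if_eccentricity_le_2[where c = 2]) (simp_all add: certificate_simps)
  show "\<forall>i\<in>{1..Suc 2}. critical_ideal {1..4} path_P4 (int i) = UNIV"
    using critical_ideal_eq_UNIV_if_unit_minor[of "{1..4}" "{1}" "{2}" 1 path_P4]
      critical_ideal_eq_UNIV_if_unit_minor[of "{1..4}" "{1, 2}" "{2, 3}" 2 path_P4]
      critical_ideal_eq_UNIV_if_unit_minor[of "{1..4}" "{1, 2, 3}" "{2, 3, 4}" 3 path_P4]
    by (simp add: minor_def gen_lap_def det_mat_1 det_mat_2 det_mat_3 certificate_simps)
qed (simp_all add: laplacian_at_def certificate_simps)

lemma Forb_le_2_K5_minus_S2: "Forb_le 2 {1..5} K5_minus_S2"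
proof (rule Forb_le_if_certificate[where
    x  = "[ 0, -3, -1,  1, -1, -1]" and
    U  = "[[ 0,  1,  0,  1,  0,  0],
           [ 0,  0,  1,  2,  0,  0],
           [ 0,  0,  0, -2,  1,  1]]" and
    W  = "[[ 0, -3,  0, -1, -1, -1],
           [ 0,  0, -1,  0, -1, -1],
           [ 0, -1, -1, -1, -1, -1]]" and
    xs = "[[],
           [ 0,  0, -2, -2, -1, -1],
           [ 0, -3,  0, -1, -1, -1],
           [ 0, -2, -2,  0, -1, -1],
           [ 0, -1, -1, -1,  0, -2],
           [ 0, -1, -1, -1, -2,  0]]" and
    Us = "[[],
           [[ 0,  0,  1, -1,  0,  0], [ 0,  0,  0,  2,  1,  1]],
           [[ 0,  1,  0,  0,  0,  0], [ 0,  0,  0,  1,  1,  1]],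
           [[ 0,  1, -1,  0,  0,  0], [ 0,  0,  2,  0,  1,  1]],
           [[ 0,  1,  0,  1,  0,  1], [ 0,  0,  1,  0,  0,  1]],
           [[ 0,  1,  0,  1,  1,  0], [ 0,  0,  1,  0,  1,  0]]]" and
    Ws = "[[],
           [[ 0,  0, -2,  0, -1, -1], [ 0,  0, -1, -1, -1, -1]],
           [[ 0, -3,  0, -1, -1, -1], [ 0, -1,  0, -1, -1, -1]],
           [[ 0, -2,  0,  0, -1, -1], [ 0, -1, -1,  0, -1, -1]],
           [[ 0, -1,  0, -1,  0, -1], [ 0,  0, -1,  0,  0, -1]],
           [[ 0, -1,  0, -1, -1,  0], [ 0,  0, -1,  0, -1,  0]]]"])
  show "simple_graph {1..5} K5_minus_S2" by (simp add: simple_graph_complete_minus)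
  then show "connected_graph {1..5} K5_minus_S2"
    by (rule connected_graph_if_eccentricity_le_2[where c = 4]) (simp_all add: certificate_simps)
  show "\<forall>i\<in>{1..Suc 2}. critical_ideal {1..5} K5_minus_S2 (int i) = UNIV"
    using critical_ideal_eq_UNIV_if_unit_minor[of "{1..5}" "{1}" "{3}" 1 K5_minus_S2]
      critical_ideal_eq_UNIV_if_unit_minor[of "{1..5}" "{1, 2}" "{3, 4}" 2 K5_minus_S2]
      critical_ideal_eq_UNIV_if_unit_minor[of "{1..5}" "{1, 2, 4}" "{2, 3, 5}" 3 K5_minus_S2]
    by (simp add: minor_def gen_lap_def det_mat_1 det_mat_2 det_mat_3 certificate_simps)
qed (simp_all add: laplacian_at_def certificate_simps)

lemma Forb_le_2_K6_minus_M2: "Forb_le 2 {1..6} K6_minus_M2"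
proof (rule Forb_le_if_certificate[where
    x  = "[ 0, -2, -2, -2, -2, -1, -1]" and
    U  = "[[ 0,  1, -1,  0,  0,  0,  0],
           [ 0,  0,  0,  1, -1,  0,  0],
           [ 0,  0,  2,  0,  2,  1,  1]]" and
    W  = "[[ 0, -2,  0, -1, -1, -1, -1],
           [ 0, -1, -1, -2,  0, -1, -1],
           [ 0, -1, -1, -1, -1, -1, -1]]" and
    xs = "[[],
           [ 0,  0, -1, -2, -2, -1, -1],
           [ 0, -1,  0, -2, -2, -1, -1],
           [ 0, -2, -2,  0, -1, -1, -1],
           [ 0, -2, -2, -1,  0, -1, -1],
           [ 0,  0,  0,  0,  0,  0, -2],
           [ 0,  0,  0,  0,  0, -2,  0]]" and
    Us = "[[],
           [[ 0,  0,  1,  0,  2,  1,  1], [ 0,  0,  0,  1, -1,  0,  0]],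
           [[ 0,  1,  0,  0,  2,  1,  1], [ 0,  0,  0,  1, -1,  0,  0]],
           [[ 0,  1, -1,  0,  0,  0,  0], [ 0,  0,  2,  0,  1,  1,  1]],
           [[ 0,  1, -1,  0,  0,  0,  0], [ 0,  0,  2,  1,  0,  1,  1]],
           [[ 0,  1,  1,  0,  0,  0,  1], [ 0,  0,  0,  1,  1,  0,  1]],
           [[ 0,  1,  1,  0,  0,  1,  0], [ 0,  0,  0,  1,  1,  1,  0]]]" and
    Ws = "[[],
           [[ 0,  0, -1, -1, -1, -1, -1], [ 0,  0, -1, -2,  0, -1, -1]],
           [[ 0, -1,  0, -1, -1, -1, -1], [ 0, -1,  0, -2,  0, -1, -1]],
           [[ 0, -2,  0,  0, -1, -1, -1], [ 0, -1, -1,  0, -1, -1, -1]],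
           [[ 0, -2,  0, -1,  0, -1, -1], [ 0, -1, -1, -1,  0, -1, -1]],
           [[ 0,  0,  0, -1, -1,  0, -1], [ 0, -1, -1,  0,  0,  0, -1]],
           [[ 0,  0,  0, -1, -1, -1,  0], [ 0, -1, -1,  0,  0, -1,  0]]]"])
  show "simple_graph {1..6} K6_minus_M2" by (simp add: simple_graph_complete_minus)
  then show "connected_graph {1..6} K6_minus_M2"
    by (rule connected_graph_if_eccentricity_le_2[where c = 5]) (simp_all add: certificate_simps)
  show "\<forall>i\<in>{1..Suc 2}. critical_ideal {1..6} K6_minus_M2 (int i) = UNIV"
    using critical_ideal_eq_UNIV_if_unit_minor[of "{1..6}" "{1}" "{3}" 1 K6_minus_M2]
      critical_ideal_eq_UNIV_if_unit_minor[of "{1..6}" "{1, 3}" "{1, 4}" 2 K6_minus_M2]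
      critical_ideal_eq_UNIV_if_unit_minor[of "{1..6}" "{1, 3, 5}" "{2, 4, 6}" 3 K6_minus_M2]
    by (simp add: minor_def gen_lap_def det_mat_1 det_mat_2 det_mat_3 certificate_simps)
qed (simp_all add: laplacian_at_def certificate_simps)

lemma Forb_le_2_cricket: "Forb_le 2 {1..5} cricket"
proof (rule Forb_le_if_certificate[where
    x  = "[ 0, -3, -1, -1, -1,  3]" and
    U  = "[[ 0,  1,  0,  0,  0,  1],
           [ 0,  0,  1,  1,  0,  3],
           [ 0,  0,  0,  0,  1, -3]]" and
    W  = "[[ 0, -3,  0,  0, -1,  0],
           [ 0,  0, -1, -1, -1,  0],
           [ 0, -1, -1, -1, -1, -1]]" and
    xs = "[[],
           [ 0,  0, -1, -1, -2, -1],
           [ 0,  0,  0,  0, -3,  0],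
           [ 0,  0,  0,  0, -3,  0],
           [ 0, -3, -1, -1,  0,  0],
           [ 0, -1, -1, -1, -2,  0]]" and
    Us = "[[],
           [[ 0,  0,  1,  1,  0, -1], [ 0,  0,  0,  0,  1,  1]],
           [[ 0,  1,  0,  1,  0,  1], [ 0,  0,  0,  0,  1,  0]],
           [[ 0,  1,  1,  0,  0,  1], [ 0,  0,  0,  0,  1,  0]],
           [[ 0,  1,  0,  0,  0,  0], [ 0,  0,  1,  1,  0,  0]],
           [[ 0,  1,  0,  0,  1,  0], [ 0,  0,  1,  1,  1,  0]]]" and
    Ws = "[[],
           [[ 0,  0, -1, -1, -1,  0], [ 0,  0, -1, -1, -2, -1]],
           [[ 0,  0,  0,  0, -1,  0], [ 0, -1,  0, -1, -3, -1]],
           [[ 0,  0,  0,  0, -1,  0], [ 0, -1, -1,  0, -3, -1]],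
           [[ 0, -3,  0,  0,  0,  0], [ 0,  0, -1, -1,  0,  0]],
           [[ 0, -1,  0,  0, -1,  0], [ 0,  0, -1, -1, -1,  0]]]"])
  show "simple_graph {1..5} cricket" by (simp add: simple_graph_edges_of)
  then show "connected_graph {1..5} cricket"
    by (rule connected_graph_if_eccentricity_le_2[where c = 4]) (simp_all add: certificate_simps)
  show "\<forall>i\<in>{1..Suc 2}. critical_ideal {1..5} cricket (int i) = UNIV"
    using critical_ideal_eq_UNIV_if_unit_minor[of "{1..5}" "{1}" "{4}" 1 cricket]
      critical_ideal_eq_UNIV_if_unit_minor[of "{1..5}" "{1, 2}" "{3, 4}" 2 cricket]
      critical_ideal_eq_UNIV_if_unit_minor[of "{1..5}" "{1, 2, 4}" "{3, 4, 5}" 3 cricket]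
    by (simp add: minor_def gen_lap_def det_mat_1 det_mat_2 det_mat_3 certificate_simps)
qed (simp_all add: laplacian_at_def certificate_simps)

lemma Forb_le_2_dart: "Forb_le 2 {1..5} dart"
proof (rule Forb_le_if_certificate[where
    x  = "[ 0, -2, -1, -2, -2, -1]" and
    U  = "[[ 0,  1,  0, -1,  0,  0],
           [ 0,  0,  1,  2,  0, -1],
           [ 0,  0,  0,  0,  1,  1]]" and
    W  = "[[ 0, -2, -1,  0, -1,  0],
           [ 0, -1, -1, -1, -1,  0],
           [ 0, -1, -1, -1, -2, -1]]" and
    xs = "[[],
           [ 0,  0, -1, -1, -2, -1],
           [ 0,  0,  0,  0, -3,  0],
           [ 0, -1, -1,  0, -2, -1],
           [ 0, -3,  0,  3,  0,  0],
           [ 0, -2, -1, -2, -1,  0]]" and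
    Us = "[[],
           [[ 0,  0,  1,  1,  0, -1], [ 0,  0,  0,  0,  1,  1]],
           [[ 0,  1,  0,  1,  0,  1], [ 0,  0,  0,  0,  1,  0]],
           [[ 0,  1,  1,  0,  0, -1], [ 0,  0,  0,  0,  1,  1]],
           [[ 0,  1,  0,  1,  0,  0], [ 0,  0,  1, -3,  0,  0]],
           [[ 0,  1,  0, -1,  0,  0], [ 0,  0,  1,  2,  1,  0]]]" and
    Ws = "[[],
           [[ 0,  0, -1, -1, -1,  0], [ 0,  0, -1, -1, -2, -1]],
           [[ 0,  0,  0,  0, -1,  0], [ 0, -1,  0, -1, -3, -1]],
           [[ 0, -1, -1,  0, -1,  0], [ 0, -1, -1,  0, -2, -1]],
           [[ 0, -3, -1,  0,  0,  0], [ 0, -1,  0, -1,  0,  0]],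
           [[ 0, -2, -1,  0, -1,  0], [ 0, -1, -1, -1, -1,  0]]]"])
  show "simple_graph {1..5} dart" by (simp add: simple_graph_edges_of)
  then show "connected_graph {1..5} dart"
    by (rule connected_graph_if_eccentricity_le_2[where c = 4]) (simp_all add: certificate_simps)
  show "\<forall>i\<in>{1..Suc 2}. critical_ideal {1..5} dart (int i) = UNIV"
    using critical_ideal_eq_UNIV_if_unit_minor[of "{1..5}" "{1}" "{2}" 1 dart]
      critical_ideal_eq_UNIV_if_unit_minor[of "{1..5}" "{1, 2}" "{2, 3}" 2 dart]
      critical_ideal_eq_UNIV_if_unit_minor[of "{1..5}" "{1, 2, 4}" "{2, 3, 5}" 3 dart]
    by (simp add: minor_def gen_lap_def det_mat_1 det_mat_2 det_mat_3 certificate_simps)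
qed (simp_all add: laplacian_at_def certificate_simps)

theorem proposition4p1:
  shows "\<forall>(V, E) \<in> F2. Forb_le 2 V E"
  using Forb_le_2_path_P4 Forb_le_2_K5_minus_S2 Forb_le_2_K6_minus_M2
    Forb_le_2_cricket Forb_le_2_dart
  unfolding F2_def by auto

end
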